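(* Let $\mathcal A(x,m)=\{\mu\in\mathcal P(\mathcal X):\mu\ll m\}$ (the dual sets of the worst-case mapping $\sigma(x,m,v)=\max_{y:m(y)>0}v(y)$). Then the associated risk multikernel $\mathfrak M$ is not semi-differentiable at $\mathcal I$ in any direction $K\in\mathcal T_{\mathcal Q}(\mathcal I)$ with $K\ne0$.
   Context: $\mathcal X$ is a finite set, $\mathcal P(\mathcal X)$ the probability measures on $\mathcal X$, $\mathcal S$ the vector space of signed kernels $K:\mathcal X\to\mathcal M(\mathcal X)$, written $K(y|x)$, with norm $\|K\|=\sup\{\sum_{y}\varphi(y)K(y|x):x\in\mathcal X,\ -1\le\varphi\le1\}$; $\mathcal Q\subset\mathcal S$ the stochastic kernels; $\mathcal I(x)=\delta_x$. $\mathrm d(K,B)=\inf_{M\in B}\|K-M\|$ ($=+\infty$ if $B=\emptyset$), and $\mathrm{dist}(\mathcal S_1,\mathcal S_2)=\max(\sup_{K\in\mathcal S_1}\mathrm d(K,\mathcal S_2),\sup_{K\in\mathcal S_2}\mathrm d(K,\mathcal S_1))$. The tangent cone is $\mathcal T_{\mathcal Q}(\mathcal I)=\{K\in\mathcal S:\lim_{\tau\downarrow0}\mathrm d(K,\frac1\tau(\mathcal Q-\mathcal I))=0\}$. The risk multikernel associated with $\mathcal A$ is $\mathfrak M(Q)=\{M\in\mathcal Q: M(x)\in\mathcal A(x,Q(x))\ \forall x\}$. $\mathfrak M$ is semi-differentiable at $\mathcal I$ in direction $K\in\mathcal T_{\mathcal Q}(\mathcal I)$ if there is a nonempty set $\mathfrak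 D(K)\subset\mathcal S$ such that for every $\varepsilon_n\downarrow0$ and every $K_n\to K$ with $K_n\in\mathcal T_{\mathcal Q}(\mathcal I)$, $\lim_{n}\mathrm{dist}\big(\frac1{\varepsilon_n}[\mathfrak M(\mathcal I+\varepsilon_nK_n)-\mathcal I],\mathfrak D(K)\big)=0$. *)

theory Defs
  imports "HOL-Analysis.Analysis"
begin

(* A signed kernel K on the finite set 'a is a function K :: 'a => 'a => real,
   with K x y = K(y|x). *)
type_synonym 'a kernel = "'a \<Rightarrow> 'a \<Rightarrow> real"

definition knorm :: "('a::finite) kernel \<Rightarrow> real" where
  "knorm K = Sup {(\<Sum>y\<in>UNIV. \<phi> y * K x y) | x \<phi>. \<forall>y. -1 \<le> \<phi> y \<and> \<phi> y \<le> 1}"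

definition stoch :: "('a::finite) kernel set" where
  "stoch = {Q. \<forall>x. (\<forall>y. 0 \<le> Q x y) \<and> (\<Sum>y\<in>UNIV. Q x y) = 1}"

definition idk :: "'a kernel" where
  "idk = (\<lambda>x y. if y = x then 1 else 0)"

(* d(K,B) = inf_{M in B} ||K - M||, = +infinity if B is empty *)
definition kd :: "('a::finite) kernel \<Rightarrow> 'a kernel set \<Rightarrow> ereal" where
  "kd K B = (INF M\<in>B. ereal (knorm (\<lambda>x y. K x y - M x y)))"

definition kdist :: "('a::finite) kernel set \<Rightarrow> 'a kernel set \<Rightarrow> ereal" where
  "kdist S1 S2 = max (SUP K\<in>S1. kd K S2) (SUP K\<in>S2. kd K S1)"

definition scaled_diff :: "real \<Rightarrow> 'a kernel set \<Rightarrow> 'a kernel set" where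
  "scaled_diff t B = (\<lambda>M. \<lambda>x y. (M x y - idk x y) / t) ` B"

definition tangent_cone :: "('a::finite) kernel set" where
  "tangent_cone = {K. ((\<lambda>\<tau>. kd K (scaled_diff \<tau> stoch)) \<longlongrightarrow> 0) (at_right (0::real))}"

definition dualA :: "'a \<Rightarrow> ('a::finite \<Rightarrow> real) \<Rightarrow> ('a \<Rightarrow> real) set" where
  "dualA x m = {\<mu>. (\<forall>y. 0 \<le> \<mu> y) \<and> (\<Sum>y\<in>UNIV. \<mu> y) = 1 \<and> (\<forall>y. m y = 0 \<longrightarrow> \<mu> y = 0)}"

definition riskM :: "('a::finite) kernel \<Rightarrow> 'a kernel set" where
  "riskM Q = {M \<in> stoch. \<forall>x. M x \<in> dualA x (Q x)}"

definition semi_diff_at_I :: "('a::finite) kernel \<Rightarrow> bool" where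
  "semi_diff_at_I K \<longleftrightarrow> (\<exists>D. D \<noteq> {} \<and>
     (\<forall>(\<epsilon>::nat \<Rightarrow> real) Kn. (\<forall>n. 0 < \<epsilon> n) \<and> decseq \<epsilon> \<and> \<epsilon> \<longlonglongrightarrow> 0 \<and>
        (\<lambda>n. knorm (\<lambda>x y. Kn n x y - K x y)) \<longlonglongrightarrow> 0 \<and> (\<forall>n. Kn n \<in> tangent_cone) \<longrightarrow>
        (\<lambda>n. kdist (scaled_diff (\<epsilon> n) (riskM (\<lambda>x y. idk x y + \<epsilon> n * Kn n x y))) D)
          \<longlonglongrightarrow> 0))"

end

theory Submission
  imports Defs
begin

text \<open>Every element of the tangent cone has zero row sums, so a nonzero direction K has a
nonzero off-diagonal entry K(y0|x0). For every \<epsilon> > 0 the point mass at y0 is then an admissible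
row x0 of a kernel in \<open>\<MM>(\<I> + \<epsilon>K)\<close>, so the difference quotient at \<epsilon> contains a kernel whose
(x0,y0)-entry is 1/\<epsilon>, and no kernel with a larger one. Two difference quotients within distance 1
of the same set \<open>\<DD>(K)\<close> have (x0,y0)-entries less than 2 apart, which fails for \<epsilon> = 1/(N+1)
and \<epsilon> = 1/(N+3).\<close>

lemma weighted_row_sum_le_knorm:
  fixes K :: "('a::finite) kernel"
  assumes "\<And>y. -1 \<le> \<phi> y \<and> \<phi> y \<le> 1"
  shows "(\<Sum>y\<in>UNIV. \<phi> y * K x y) \<le> knorm K"
  unfolding knorm_def
proof (rule cSup_upper)
  show "(\<Sum>y\<in>UNIV. \<phi> y * K x y) \<in> {(\<Sum>y\<in>UNIV. \<phi> y * K x y) | x \<phi>. \<forall>y. -1 \<le> \<phi> y \<and> \<phi> y \<le> 1}"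
    using assms by blast
  have "(\<Sum>y\<in>UNIV. \<psi> y * K x' y) \<le> (\<Sum>x\<in>UNIV. \<Sum>y\<in>UNIV. \<bar>K x y\<bar>)"
    if "\<forall>y. -1 \<le> \<psi> y \<and> \<psi> y \<le> 1" for x' \<psi>
  proof -
    have "\<psi> y * K x' y \<le> \<bar>K x' y\<bar>" for y
    proof -
      have "\<bar>\<psi> y\<bar> \<le> 1"
        using that by (simp add: abs_le_iff)
      then have "\<bar>\<psi> y * K x' y\<bar> \<le> \<bar>K x' y\<bar>"
        by (simp add: abs_mult mult_left_le_one_le)
      then show ?thesis
        by linarith
    qed
    then have "(\<Sum>y\<in>UNIV. \<psi> y * K x' y) \<le> (\<Sum>y\<in>UNIV. \<bar>K x' y\<bar>)"
      by (rule sum_mono)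
    also have "\<dots> \<le> (\<Sum>x\<in>UNIV. \<Sum>y\<in>UNIV. \<bar>K x y\<bar>)"
      by (rule member_le_sum) (auto intro: sum_nonneg)
    finally show ?thesis .
  qed
  then show "bdd_above {(\<Sum>y\<in>UNIV. \<phi> y * K x y) | x \<phi>. \<forall>y. -1 \<le> \<phi> y \<and> \<phi> y \<le> 1}"
    unfolding bdd_above_def by blast
qed

lemma knorm_zero: "knorm (\<lambda>(x::'a::finite) y. 0) = 0"
proof -
  have "{(\<Sum>y\<in>(UNIV::'a set). \<phi> y * 0) | (x::'a) \<phi>. \<forall>y. -1 \<le> \<phi> y \<and> \<phi> y \<le> (1::real)} = {0}"
    by (auto intro!: exI[of _ "\<lambda>_. 0"])
  then show ?thesis
    unfolding knorm_def by simp
qed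

lemma abs_entry_le_knorm:
  fixes K :: "('a::finite) kernel"
  shows "\<bar>K x y\<bar> \<le> knorm K"
proof -
  have "(\<Sum>z\<in>UNIV. (if z = y then c else 0) * K x z) = c * K x y" for c
    by (simp add: if_distrib[of "\<lambda>a. a * _"] cong: if_cong)
  moreover have "(\<Sum>z\<in>UNIV. (if z = y then c else 0) * K x z) \<le> knorm K" if "\<bar>c\<bar> = 1" for c
    using that by (intro weighted_row_sum_le_knorm) auto
  ultimately have "K x y \<le> knorm K" "- K x y \<le> knorm K"
    by (metis abs_one mult_1, metis abs_minus_cancel abs_one mult_minus1)
  then show ?thesis
    by linarith
qed

lemma abs_row_sum_le_knorm:
  fixes K :: "('a::finite) kernel"
  shows "\<bar>\<Sum>y\<in>UNIV. K x y\<bar> \<le> knorm K"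
  using weighted_row_sum_le_knorm[of "\<lambda>_. 1" K x] weighted_row_sum_le_knorm[of "\<lambda>_. -1" K x]
  by (simp add: sum_negf)

lemma row_sum_scaled_diff_stoch:
  fixes A :: "('a::finite) kernel"
  assumes "A \<in> scaled_diff \<tau> stoch"
  shows "(\<Sum>y\<in>UNIV. A x y) = 0"
proof -
  obtain M where "M \<in> stoch" and A: "A = (\<lambda>x y. (M x y - idk x y) / \<tau>)"
    using assms unfolding scaled_diff_def by blast
  moreover have "(\<Sum>y\<in>UNIV. idk x y) = 1"
    by (simp add: idk_def)
  ultimately show ?thesis
    by (simp add: stoch_def sum_divide_distrib[symmetric] sum_subtractf)
qed

text \<open>Kernels in \<open>(\<Q> - \<I>)/\<tau>\<close> have zero row sums, so the row sums of K bound every distance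
in the definition of the tangent cone from below.\<close>
lemma tangent_cone_row_sum:
  fixes K :: "('a::finite) kernel"
  assumes "K \<in> tangent_cone"
  shows "(\<Sum>y\<in>UNIV. K x y) = 0"
proof -
  have bound: "ereal \<bar>\<Sum>y\<in>UNIV. K x y\<bar> \<le> kd K (scaled_diff \<tau> stoch)" for \<tau>
    unfolding kd_def
  proof (rule INF_greatest)
    fix A :: "'a kernel"
    assume "A \<in> scaled_diff \<tau> stoch"
    then have "(\<Sum>y\<in>UNIV. K x y) = (\<Sum>y\<in>UNIV. K x y - A x y)"
      by (simp add: sum_subtractf row_sum_scaled_diff_stoch)
    then show "ereal \<bar>\<Sum>y\<in>UNIV. K x y\<bar> \<le> ereal (knorm (\<lambda>x y. K x y - A x y))"
      using abs_row_sum_le_knorm[of "\<lambda>x y. K x y - A x y" x] by simp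
  qed
  have "ereal \<bar>\<Sum>y\<in>UNIV. K x y\<bar> \<le> 0"
    by (rule tendsto_lowerbound[OF assms[unfolded tangent_cone_def, simplified]])
      (use bound in auto)
  then show ?thesis
    by simp
qed

lemma offdiag_entry_nonzero:
  fixes K :: "('a::finite) kernel"
  assumes "\<And>x. (\<Sum>y\<in>UNIV. K x y) = 0" and "K \<noteq> (\<lambda>x y. 0)"
  obtains x y where "y \<noteq> x" "K x y \<noteq> 0"
proof -
  obtain x y where xy: "K x y \<noteq> 0"
    using assms(2) by (meson ext)
  show ?thesis
  proof (cases "y = x")
    case False
    then show ?thesis
      using that xy by blast
  next
    case True
    have "(\<Sum>z\<in>UNIV - {x}. K x z) = - K x x"
      using assms(1)[of x] by (simp add: sum.remove[of UNIV x])
    then have "(\<Sum>z\<in>UNIV - {x}. K x z) \<noteq> 0"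
      using xy True by simp
    then obtain z where "z \<in> UNIV - {x}" "K x z \<noteq> 0"
      by (meson sum.neutral)
    then show ?thesis
      using that by blast
  qed
qed

lemma stoch_entry_le_one:
  assumes "M \<in> stoch"
  shows "M x y \<le> 1"
proof -
  have "M x y \<le> (\<Sum>z\<in>UNIV. M x z)"
    using assms by (intro member_le_sum) (auto simp: stoch_def)
  then show ?thesis
    using assms by (simp add: stoch_def)
qed

lemma scaled_riskM_offdiag_le:
  assumes "B \<in> scaled_diff \<tau> (riskM Q)" and "\<tau> > 0" and "y \<noteq> x"
  shows "B x y \<le> 1 / \<tau>"
proof -
  obtain M where M: "M \<in> stoch" and "B = (\<lambda>x y. (M x y - idk x y) / \<tau>)"
    using assms(1) unfolding scaled_diff_def riskM_def by blast
  then show ?thesis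
    using assms(2,3) stoch_entry_le_one[OF M, of x y] by (simp add: idk_def divide_right_mono)
qed

text \<open>Each row of Q sums to 1, so it has a nonzero entry; point masses at such entries, with
the one at y in row x, form a kernel of \<open>\<MM>(Q)\<close>.\<close>
lemma scaled_riskM_offdiag_attained:
  fixes Q :: "('a::finite) kernel"
  assumes "\<And>x. (\<Sum>y\<in>UNIV. Q x y) = 1" and "Q x y \<noteq> 0" and "y \<noteq> x"
  shows "\<exists>A \<in> scaled_diff \<tau> (riskM Q). A x y = 1 / \<tau>"
proof -
  have "\<exists>z. Q x' z \<noteq> 0" for x'
  proof (rule ccontr)
    assume "\<nexists>z. Q x' z \<noteq> 0"
    then show False
      using assms(1)[of x'] by simp
  qed
  then have "Q x' (SOME z. Q x' z \<noteq> 0) \<noteq> 0" for x'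
    by (rule someI_ex)
  then obtain pick where pick: "\<And>x'. Q x' (pick x') \<noteq> 0" and "pick x = y"
    using assms(2) by (intro that[of "\<lambda>x'. if x' = x then y else SOME z. Q x' z \<noteq> 0"]) auto
  define M where "M x' z = (if z = pick x' then 1 else 0 :: real)" for x' z
  have "M \<in> riskM Q"
    using pick by (auto simp: riskM_def stoch_def dualA_def M_def)
  then have "(\<lambda>x y. (M x y - idk x y) / \<tau>) \<in> scaled_diff \<tau> (riskM Q)"
    unfolding scaled_diff_def by blast
  moreover have "M x y = 1" "idk x y = 0"
    using assms(3) \<open>pick x = y\<close> by (auto simp: M_def idk_def)
  ultimately show ?thesis
    by (intro bexI[of _ "\<lambda>x y. (M x y - idk x y) / \<tau>"]) simp_all
qed

lemma kdist_lt_witness: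
  assumes "kdist S D < ereal r" and "A \<in> S"
  obtains d where "d \<in> D" "knorm (\<lambda>x y. A x y - d x y) < r"
proof -
  have "kd A D \<le> (SUP K\<in>S. kd K D)"
    using assms(2) by (rule SUP_upper)
  also have "\<dots> < ereal r"
    using assms(1) unfolding kdist_def by simp
  finally show ?thesis
    using that unfolding kd_def by (auto simp: INF_less_iff)
qed

lemma kdist_commute: "kdist S D = kdist D S"
  unfolding kdist_def by (rule max.commute)

lemma kdist_entry_gap:
  assumes "kdist S D < 1" and "kdist T D < 1" and "A \<in> S"
    and "\<And>B. B \<in> T \<Longrightarrow> B x y \<le> c"
  shows "A x y < c + 2"
proof -
  obtain d where d: "d \<in> D" "knorm (\<lambda>x y. A x y - d x y) < 1"
    using assms(1,3) kdist_lt_witness[of S D 1] by (auto simp: one_ereal_def)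
  obtain B where B: "B \<in> T" "knorm (\<lambda>x y. d x y - B x y) < 1"
    using assms(2) d(1) kdist_lt_witness[of D T 1] by (auto simp: one_ereal_def kdist_commute)
  have "A x y - d x y < 1" "d x y - B x y < 1"
    using d(2) B(2) abs_entry_le_knorm[of "\<lambda>x y. A x y - d x y" x y]
      abs_entry_le_knorm[of "\<lambda>x y. d x y - B x y" x y] by auto
  then show ?thesis
    using assms(4)[OF B(1)] by linarith
qed

theorem mainTheorem11:
  fixes K :: "('a::finite) kernel"
  assumes "K \<in> tangent_cone" and "K \<noteq> (\<lambda>x y. 0)"
  shows "\<not> semi_diff_at_I K"
proof
  have rows: "(\<Sum>y\<in>UNIV. K x y) = 0" for x
    using tangent_cone_row_sum[OF assms(1)] .
  obtain x0 y0 where xy: "y0 \<noteq> x0" "K x0 y0 \<noteq> 0"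
    using offdiag_entry_nonzero[OF rows assms(2)] .
  assume "semi_diff_at_I K"
  then obtain D where conv: "\<And>\<epsilon> Kn. (\<forall>n. 0 < \<epsilon> n) \<and> decseq \<epsilon> \<and> \<epsilon> \<longlonglongrightarrow> 0 \<and>
        (\<lambda>n. knorm (\<lambda>x y. Kn n x y - K x y)) \<longlonglongrightarrow> 0 \<and> (\<forall>n. Kn n \<in> tangent_cone) \<Longrightarrow>
        (\<lambda>n. kdist (scaled_diff (\<epsilon> n) (riskM (\<lambda>x y. idk x y + \<epsilon> n * Kn n x y))) D) \<longlonglongrightarrow> 0"
    unfolding semi_diff_at_I_def by blast
  define \<epsilon> where "\<epsilon> n = 1 / real (Suc n)" for n
  define S where "S n = scaled_diff (\<epsilon> n) (riskM (\<lambda>x y. idk x y + \<epsilon> n * K x y))" for n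
  have "(\<lambda>n. kdist (S n) D) \<longlonglongrightarrow> 0"
    unfolding S_def using assms(1) LIMSEQ_inverse_real_of_nat
    by (intro conv) (auto simp: \<epsilon>_def knorm_zero decseq_def frac_le inverse_eq_divide)
  from order_tendstoD(2)[OF this, of 1]
  obtain N where N: "\<And>n. n \<ge> N \<Longrightarrow> kdist (S n) D < 1"
    by (auto simp: eventually_sequentially)
  have rows_perturbed: "(\<Sum>y\<in>UNIV. idk x y + \<epsilon> n * K x y) = 1" for x n
    by (simp add: sum.distrib idk_def sum_distrib_left[symmetric] rows)
  have "\<exists>A \<in> S (N + 2). A x0 y0 = 1 / \<epsilon> (N + 2)"
    unfolding S_def using xy
    by (intro scaled_riskM_offdiag_attained rows_perturbed) (simp_all add: idk_def \<epsilon>_def)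
  moreover have "B x0 y0 \<le> 1 / \<epsilon> N" if "B \<in> S N" for B
    using that xy unfolding S_def by (intro scaled_riskM_offdiag_le) (simp_all add: \<epsilon>_def)
  ultimately have "1 / \<epsilon> (N + 2) < 1 / \<epsilon> N + 2"
    using kdist_entry_gap[OF N N, of "N + 2" N] by force
  then show False
    by (simp add: \<epsilon>_def)
qed

end
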